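(* Let $q\in(0,1]$ and $x,y\in[0,q]$. If $|x-y|\le q/e^2$, then $|\chi(x\|q)-\chi(y\|q)|\le\chi(|x-y|\,\|\,q)$.
   Context: For $q>0$, $\chi(x\|q)=x\log_2^2(x/q)$ for $x\in(0,1]$, extended by continuity with $\chi(0\|q)=0$. *)

theory Defs
  imports "HOL-Analysis.Analysis"
begin

definition chi :: "real \<Rightarrow> real \<Rightarrow> real" where
  "chi x q = (if x = 0 then 0 else x * (log 2 (x / q))^2)"

end

theory Submission
  imports Defs
begin

text \<open>Substituting u = x/q reduces the claim to h(u) = u (ln u)^2 on [0,1], with
h'(u) = (ln u + 1)^2 - 1. Since h' \<ge> -1, h cannot drop by more than the step d = |u - v|,
and d \<le> h(d) because ln d \<le> -2. An increase of h is handled in two regimes: above e^-2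
we have -2 \<le> ln u \<le> 0, so h' \<le> 0 and h does not increase at all; below e^-2 both
points lie in (0, 1/e], where h' is decreasing, so h is concave there and hence subadditive,
which gives h(u) - h(v) \<le> h(u - v).\<close>

lemma subadditive_of_deriv_antimono:
  fixes f f' :: "real \<Rightarrow> real"
  assumes deriv: "\<And>x. 0 < x \<Longrightarrow> x \<le> b \<Longrightarrow> (f has_real_derivative f' x) (at x)"
    and antimono: "\<And>x y. 0 < x \<Longrightarrow> x \<le> y \<Longrightarrow> y \<le> b \<Longrightarrow> f' y \<le> f' x"
    and tangent: "\<And>x. 0 < x \<Longrightarrow> x \<le> b \<Longrightarrow> x * f' x \<le> f x"
    and "0 < a" "0 < c" "a + c \<le> b"
  shows "f (a + c) \<le> f a + f c"
proof -
  have ordered: "f (a + c) \<le> f a + f c" if "0 < a" "a \<le> c" "a + c \<le> b" for a c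
  proof -
    have "\<And>x. c \<le> x \<Longrightarrow> x \<le> a + c \<Longrightarrow> (f has_real_derivative f' x) (at x)"
      using deriv that by simp
    then obtain w where w: "c < w" "w < a + c" "f (a + c) - f c = a * f' w"
      using MVT2[of c "a + c" f f'] \<open>0 < a\<close> by auto
    have "a * f' w \<le> a * f' a"
      using antimono[of a w] w that by (simp add: mult_left_mono)
    also have "\<dots> \<le> f a"
      using tangent that by simp
    finally show ?thesis using w(3) by simp
  qed
  show ?thesis
    using ordered[of a c] ordered[of c a] assms(4-6) by (cases "a \<le> c") (simp_all add: add.commute)
qed

lemma ln_le_iff_le_exp: "0 < (x::real) \<Longrightarrow> ln x \<le> y \<longleftrightarrow> x \<le> exp y"
  using exp_le_cancel_iff[of "ln x" y] by simp

definition xlnsq :: "real \<Rightarrow> real" where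
  "xlnsq u = u * (ln u)^2"

lemma xlnsq_0 [simp]: "xlnsq 0 = 0"
  by (simp add: xlnsq_def)

lemma xlnsq_nonneg: "0 \<le> u \<Longrightarrow> 0 \<le> xlnsq u"
  by (simp add: xlnsq_def)

lemma has_real_derivative_xlnsq:
  "0 < u \<Longrightarrow> (xlnsq has_real_derivative (ln u + 1)^2 - 1) (at u)"
  unfolding xlnsq_def
  by (auto intro!: derivative_eq_intros simp: field_simps power2_eq_square)

lemma xlnsq_ge_self:
  assumes "0 < d" "d \<le> exp (-1)"
  shows "d \<le> xlnsq d"
proof -
  have "ln d \<le> -1"
    using ln_le_iff_le_exp[of d "-1"] assms by simp
  then have "1 \<le> (ln d)^2"
    using power_mono[of 1 "- ln d" 2] by simp
  then show ?thesis
    using assms mult_left_mono[of 1 "(ln d)^2" d] by (simp add: xlnsq_def)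
qed

lemma xlnsq_drop_le:
  assumes "0 < s" "s \<le> t"
  shows "xlnsq s - xlnsq t \<le> t - s"
proof -
  have "xlnsq s + s \<le> xlnsq t + t"
  proof (rule DERIV_nonneg_imp_nondecreasing[OF \<open>s \<le> t\<close>])
    fix x assume "s \<le> x" "x \<le> t"
    then have "((\<lambda>x. xlnsq x + x) has_real_derivative (ln x + 1)^2) (at x)"
      using has_real_derivative_xlnsq[of x] \<open>0 < s\<close>
      by (auto intro!: derivative_eq_intros)
    then show "\<exists>y. ((\<lambda>x. xlnsq x + x) has_real_derivative y) (at x) \<and> 0 \<le> y"
      by (intro exI[of _ "(ln x + 1)^2"] conjI) simp_all
  qed
  then show ?thesis by simp
qed

lemma xlnsq_antimono:
  assumes "exp (-2) \<le> s" "s \<le> t" "t \<le> 1"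
  shows "xlnsq t \<le> xlnsq s"
proof (rule DERIV_nonpos_imp_nonincreasing[OF \<open>s \<le> t\<close>])
  fix x assume x: "s \<le> x" "x \<le> t"
  have "0 < x" using x assms by (meson exp_gt_zero less_le_trans)
  have "-2 \<le> ln x" "ln x \<le> 0"
    using x assms \<open>0 < x\<close> ln_ge_iff[of x "-2"] by auto
  have "(ln x + 1)^2 - 1 = ln x * (ln x + 2)"
    by (simp add: power2_eq_square algebra_simps)
  also have "\<dots> \<le> 0"
    using \<open>-2 \<le> ln x\<close> \<open>ln x \<le> 0\<close> by (simp add: mult_nonpos_nonneg)
  finally have "(ln x + 1)^2 - 1 \<le> 0" .
  then show "\<exists>y. (xlnsq has_real_derivative y) (at x) \<and> y \<le> 0"
    using has_real_derivative_xlnsq[OF \<open>0 < x\<close>] by (intro exI conjI)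
qed

lemma xlnsq_subadditive:
  assumes "0 < a" "0 < c" "a + c \<le> exp (-1)"
  shows "xlnsq (a + c) \<le> xlnsq a + xlnsq c"
proof (rule subadditive_of_deriv_antimono[where f' = "\<lambda>u. (ln u + 1)^2 - 1"])
  show "(xlnsq has_real_derivative (ln x + 1)^2 - 1) (at x)" if "0 < x" for x :: real
    using has_real_derivative_xlnsq[OF that] .
  show "(ln y + 1)^2 - 1 \<le> (ln x + 1)^2 - 1" if "0 < x" "x \<le> y" "y \<le> exp (-1)" for x y :: real
  proof -
    have "ln x \<le> ln y" "ln y \<le> -1"
      using that ln_le_iff_le_exp[of y "-1"] by auto
    then have "(-(ln y + 1))^2 \<le> (-(ln x + 1))^2"
      by (intro power_mono) auto
    then show ?thesis
      unfolding power2_minus by simp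
  qed
  show "x * ((ln x + 1)^2 - 1) \<le> xlnsq x" if "0 < x" "x \<le> exp (-1)" for x :: real
  proof -
    have "x \<le> 1" using that exp_le_one_iff[of "-1"] by linarith
    then have "x * ln x \<le> 0"
      using that by (simp add: mult_nonneg_nonpos)
    then show ?thesis
      by (simp add: xlnsq_def power2_eq_square algebra_simps)
  qed
qed (use assms in auto)

lemma two_exp_neg_two_le: "2 * exp (-2) \<le> exp (-1 :: real)"
proof -
  have "2 \<le> exp (1 :: real)"
    using exp_ge_add_one_self[of 1] by simp
  then have "2 * exp (-2) \<le> exp 1 * exp (-2 :: real)"
    by simp
  then show ?thesis
    by (simp flip: exp_add)
qed

lemma xlnsq_rise_le:
  assumes "0 \<le> v" "0 \<le> d" "v + d \<le> 1" "d \<le> exp (-2)"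
  shows "xlnsq (v + d) \<le> xlnsq v + xlnsq d"
proof (cases "v = 0 \<or> d = 0")
  case True
  then show ?thesis by auto
next
  case False
  then have "0 < v" "0 < d" using assms by auto
  show ?thesis
  proof (cases "exp (-2) \<le> v")
    case True
    then show ?thesis
      using xlnsq_antimono[of v "v + d"] xlnsq_nonneg[of d] assms by simp
  next
    case False
    then have "v + d \<le> exp (-1)"
      using \<open>d \<le> exp (-2)\<close> two_exp_neg_two_le by linarith
    then show ?thesis
      by (rule xlnsq_subadditive[OF \<open>0 < v\<close> \<open>0 < d\<close>])
  qed
qed

lemma xlnsq_fall_le:
  assumes "0 \<le> v" "0 \<le> d" "d \<le> exp (-1)"
  shows "xlnsq v \<le> xlnsq (v + d) + xlnsq d"
proof (cases "v = 0 \<or> d = 0")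
  case True
  then show ?thesis using assms xlnsq_nonneg[of d] by auto
next
  case False
  then have "0 < v" "0 < d" using assms by auto
  have "xlnsq v - xlnsq (v + d) \<le> d"
    using xlnsq_drop_le[of v "v + d"] \<open>0 < v\<close> \<open>0 < d\<close> by simp
  also have "\<dots> \<le> xlnsq d"
    by (rule xlnsq_ge_self[OF \<open>0 < d\<close> assms(3)])
  finally show ?thesis by simp
qed

lemma xlnsq_diff_abs_le:
  assumes "0 \<le> u" "u \<le> 1" "0 \<le> v" "v \<le> 1" "\<bar>u - v\<bar> \<le> exp (-2)"
  shows "\<bar>xlnsq u - xlnsq v\<bar> \<le> xlnsq \<bar>u - v\<bar>"
proof -
  have ordered: "\<bar>xlnsq (v + d) - xlnsq v\<bar> \<le> xlnsq d"
    if "0 \<le> v" "0 \<le> d" "v + d \<le> 1" "d \<le> exp (-2)" for v d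
  proof -
    have "d \<le> exp (-1)"
      using that(4) two_exp_neg_two_le exp_gt_zero[of "-2"] by linarith
    then show ?thesis
      using xlnsq_rise_le[OF that] xlnsq_fall_le[OF that(1,2)] by (simp add: abs_le_iff)
  qed
  show ?thesis
  proof (cases "v \<le> u")
    case True
    then show ?thesis using ordered[of v "u - v"] assms by simp
  next
    case False
    then show ?thesis using ordered[of u "v - u"] assms by (simp add: abs_minus_commute)
  qed
qed

lemma chi_eq_xlnsq:
  assumes "0 < q"
  shows "chi x q = q * xlnsq (x / q) / (ln 2)^2"
  using assms by (simp add: chi_def xlnsq_def log_def power_divide)

theorem lemma26:
  fixes q x y :: real
  assumes "0 < q" "q \<le> 1"
    and "0 \<le> x" "x \<le> q" "0 \<le> y" "y \<le> q"
    and "\<bar>x - y\<bar> \<le> q / exp 2"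
  shows "\<bar>chi x q - chi y q\<bar> \<le> chi \<bar>x - y\<bar> q"
proof -
  have scaled: "\<bar>x / q - y / q\<bar> = \<bar>x - y\<bar> / q"
    using \<open>0 < q\<close> by (simp flip: diff_divide_distrib)
  have "\<bar>x / q - y / q\<bar> \<le> exp (-2)"
    unfolding scaled using assms(1,7) by (simp add: divide_le_eq exp_minus field_simps)
  then have xlnsq_bound: "\<bar>xlnsq (x / q) - xlnsq (y / q)\<bar> \<le> xlnsq (\<bar>x - y\<bar> / q)"
    using xlnsq_diff_abs_le[of "x / q" "y / q"] assms(1,3-6) scaled by simp
  have "\<bar>chi x q - chi y q\<bar> = q * \<bar>xlnsq (x / q) - xlnsq (y / q)\<bar> / (ln 2)^2"
    using \<open>0 < q\<close> by (simp add: chi_eq_xlnsq abs_mult flip: diff_divide_distrib right_diff_distrib)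
  also have "\<dots> \<le> q * xlnsq (\<bar>x - y\<bar> / q) / (ln 2)^2"
    using xlnsq_bound \<open>0 < q\<close> by (intro divide_right_mono mult_left_mono) auto
  also have "\<dots> = chi \<bar>x - y\<bar> q"
    using \<open>0 < q\<close> by (simp add: chi_eq_xlnsq)
  finally show ?thesis .
qed

end
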